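(* Let $G$ be a group, $\mathcal{C}$ a (strict) monoidal category and $T$ a partial action of $G$ on $\mathcal{C}$ generated by a family of central idempotent objects $\{\mathbb{1}_g\}_{g\in G}$. Then for all $g,h\in G$ there is an isomorphism $\varphi^g_{gh}\colon\mathbb{1}_g\otimes\mathbb{1}_{gh}\to T_g(\mathbb{1}_{g^{-1}}\otimes\mathbb{1}_h)$.
   Context: Central idempotent: an object $e$ of $\mathcal{C}$ with an isomorphism $\Phi_e\colon e\otimes e\to e$ and a natural isomorphism $\sigma^e\colon e\otimes-\Rightarrow-\otimes e$ satisfying $\Phi_e(e\otimes\Phi_e)=\Phi_e(\Phi_e\otimes e)$, $\Phi_e\sigma^e_e=\Phi_e$, $(A\otimes\Phi_e)(\sigma^e_A\otimes e)(e\otimes\sigma^e_A)=\sigma^e_A(\Phi_e\otimes A)$ and $\sigma^e_{A\otimes B}=(A\otimes\sigma^e_B)(\sigma^e_A\otimes B)$. For a subcategory $\mathcal{D}$, $\overline{\mathcal{D}}$ is the smallest subcategory containing $\mathcal{D}$ closed under isomorphisms; $e\otimes\mathcal{C}$ is the subcategory of objects $e\otimes X$ and morphisms $e\otimes f$. For a central idempotent $e$, $\overline{e\otimes\mathcal{C}}$ is an ideal of $\mathcal{C}$ (closed under isomorphisms and under tensoring on either side by arbitrary objects) and is a monoidal category with unit $e$. A partial action of $G$ on $\mathcal{C}$ generated by central idempotents $\{\mathbb{1}_g\}_{g\in G}$ consists of: the ideals $\mathcal{C}_g=\overline{\mathbb{1}_g\otimes\mathcal{C}}$ with $\mathbb{1}_e=\mathbb{1}$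 the unit of $\mathcal{C}$ (so $\mathcal{C}_e=\mathcal{C}$); monoidal equivalences $(T_g,J^g)\colon\mathcal{C}_{g^{-1}}\to\mathcal{C}_g$, where $J^g\colon T_g(-)\otimes T_g(-)\Rightarrow T_g(-\otimes-)$ is a natural isomorphism satisfying the hexagon axiom and there is an isomorphism $\varphi^g\colon\mathbb{1}_g\to T_g(\mathbb{1}_{g^{-1}})$ compatible with the unit constraints; such that the restriction of $T_g$ to $\mathcal{C}_{g^{-1}}\cap\mathcal{C}_h$ is a semigroupal (here monoidal) equivalence onto $\mathcal{C}_g\cap\mathcal{C}_{gh}$; a natural isomorphism of semigroupal functors $u\colon\mathrm{Id}_{\mathcal{C}}\Rightarrow T_e$ (i.e. $J^e_{X,Y}\circ(u_X\otimes u_Y)=u_{X\otimes Y}$); and natural isomorphisms $\gamma_{g,h}\colon T_gT_h\Rightarrow T_{gh}$ of functors $\mathcal{C}_{h^{-1}}\cap\mathcal{C}_{h^{-1}g^{-1}}\to\mathcal{C}_g\cap\mathcal{C}_{gh}$ satisfying $J^{gh}_{X,Y}\circ((\gamma_{g,h})_X\otimes(\gamma_{g,h})_Y)=(\gamma_{g,h})_{X\otimes Y}\circ T_g(J^h_{X,Y})\circ J^g_{T_h(X),T_h(Y)}$; moreover $(\gamma_{gh,k})_X\circ(\gamma_{g,h})_{T_k(X)}=(\gamma_{g,hk})_X\circ T_g((\gamma_{h,k})_X)$ for $X\in\mathcal{C}_{k^{-1}}\cap\mathcal{C}_{k^{-1}h^{-1}}\cap\mathcal{C}_{k^{-1}h^{-1}g^{-1}}$,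 and for $X\in\mathcal{C}_{g^{-1}}$ the morphisms $u_{T_g(X)}$ and $(\gamma_{e,g})_X$ are mutually inverse, as are $T_g(u_X)$ and $(\gamma_{g,e})_X$. *)

theory Defs
  imports Main
begin

record ('o, 'm) mcat =
  Ob  :: "'o set"
  Ar  :: "'m set"
  src :: "'m \<Rightarrow> 'o"
  tgt :: "'m \<Rightarrow> 'o"
  idm :: "'o \<Rightarrow> 'm"
  cmp :: "'m \<Rightarrow> 'm \<Rightarrow> 'm"   (* cmp C g f = g \<circ> f *)
  tno :: "'o \<Rightarrow> 'o \<Rightarrow> 'o"
  tnm :: "'m \<Rightarrow> 'm \<Rightarrow> 'm"
  unt :: "'o"

definition hom :: "('o,'m) mcat \<Rightarrow> 'm \<Rightarrow> 'o \<Rightarrow> 'o \<Rightarrow> bool" where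
  "hom C f X Y \<longleftrightarrow> f \<in> Ar C \<and> src C f = X \<and> tgt C f = Y"

definition strict_monoidal_cat :: "('o,'m) mcat \<Rightarrow> bool" where
  "strict_monoidal_cat C \<longleftrightarrow>
     (\<forall>f\<in>Ar C. src C f \<in> Ob C \<and> tgt C f \<in> Ob C)
   \<and> (\<forall>X\<in>Ob C. hom C (idm C X) X X)
   \<and> (\<forall>f\<in>Ar C. \<forall>g\<in>Ar C. src C g = tgt C f \<longrightarrow> hom C (cmp C g f) (src C f) (tgt C g))
   \<and> (\<forall>f\<in>Ar C. cmp C f (idm C (src C f)) = f \<and> cmp C (idm C (tgt C f)) f = f)
   \<and> (\<forall>f\<in>Ar C. \<forall>g\<in>Ar C. \<forall>h\<in>Ar C. src C g = tgt C f \<and> src C h = tgt C g \<longrightarrow>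
         cmp C h (cmp C g f) = cmp C (cmp C h g) f)
   \<and> unt C \<in> Ob C
   \<and> (\<forall>X\<in>Ob C. \<forall>Y\<in>Ob C. tno C X Y \<in> Ob C)
   \<and> (\<forall>f\<in>Ar C. \<forall>g\<in>Ar C. hom C (tnm C f g) (tno C (src C f) (src C g)) (tno C (tgt C f) (tgt C g)))
   \<and> (\<forall>X\<in>Ob C. \<forall>Y\<in>Ob C. tnm C (idm C X) (idm C Y) = idm C (tno C X Y))
   \<and> (\<forall>f\<in>Ar C. \<forall>f'\<in>Ar C. \<forall>g\<in>Ar C. \<forall>g'\<in>Ar C. src C f' = tgt C f \<and> src C g' = tgt C g \<longrightarrow>
         tnm C (cmp C f' f) (cmp C g' g) = cmp C (tnm C f' g') (tnm C f g))
   \<and> (\<forall>X\<in>Ob C. \<forall>Y\<in>Ob C. \<forall>Z\<in>Ob C. tno C (tno C X Y) Z = tno C X (tno C Y Z))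
   \<and> (\<forall>X\<in>Ob C. tno C (unt C) X = X \<and> tno C X (unt C) = X)
   \<and> (\<forall>f\<in>Ar C. \<forall>g\<in>Ar C. \<forall>h\<in>Ar C. tnm C (tnm C f g) h = tnm C f (tnm C g h))
   \<and> (\<forall>f\<in>Ar C. tnm C (idm C (unt C)) f = f \<and> tnm C f (idm C (unt C)) = f)"

definition iso_in :: "('o,'m) mcat \<Rightarrow> 'm set \<Rightarrow> 'm \<Rightarrow> bool" where
  "iso_in C M f \<longleftrightarrow> f \<in> M \<and> (\<exists>g\<in>M. src C g = tgt C f \<and> tgt C g = src C f \<and>
       cmp C g f = idm C (src C f) \<and> cmp C f g = idm C (tgt C f))"

definition iso_arr :: "('o,'m) mcat \<Rightarrow> 'm \<Rightarrow> bool" where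
  "iso_arr C f \<longleftrightarrow> iso_in C (Ar C) f"

definition central_idempotent :: "('o,'m) mcat \<Rightarrow> 'o \<Rightarrow> 'm \<Rightarrow> ('o \<Rightarrow> 'm) \<Rightarrow> bool" where
  "central_idempotent C e \<Phi> \<sigma> \<longleftrightarrow>
     e \<in> Ob C
   \<and> hom C \<Phi> (tno C e e) e \<and> iso_arr C \<Phi>
   \<and> (\<forall>A\<in>Ob C. hom C (\<sigma> A) (tno C e A) (tno C A e) \<and> iso_arr C (\<sigma> A))
   \<and> (\<forall>f\<in>Ar C. cmp C (\<sigma> (tgt C f)) (tnm C (idm C e) f) = cmp C (tnm C f (idm C e)) (\<sigma> (src C f)))
   \<and> cmp C \<Phi> (tnm C (idm C e) \<Phi>) = cmp C \<Phi> (tnm C \<Phi> (idm C e))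
   \<and> cmp C \<Phi> (\<sigma> e) = \<Phi>
   \<and> (\<forall>A\<in>Ob C. cmp C (cmp C (tnm C (idm C A) \<Phi>) (tnm C (\<sigma> A) (idm C e))) (tnm C (idm C e) (\<sigma> A))
                 = cmp C (\<sigma> A) (tnm C \<Phi> (idm C A)))
   \<and> (\<forall>A\<in>Ob C. \<forall>B\<in>Ob C. \<sigma> (tno C A B) = cmp C (tnm C (idm C A) (\<sigma> B)) (tnm C (\<sigma> A) (idm C B)))"

definition subcat :: "('o,'m) mcat \<Rightarrow> 'o set \<Rightarrow> 'm set \<Rightarrow> bool" where
  "subcat C Obs M \<longleftrightarrow> Obs \<subseteq> Ob C \<and> M \<subseteq> Ar C
     \<and> (\<forall>f\<in>M. src C f \<in> Obs \<and> tgt C f \<in> Obs)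
     \<and> (\<forall>X\<in>Obs. idm C X \<in> M)
     \<and> (\<forall>f\<in>M. \<forall>g\<in>M. src C g = tgt C f \<longrightarrow> cmp C g f \<in> M)"

definition iso_closed :: "('o,'m) mcat \<Rightarrow> 'o set \<Rightarrow> 'm set \<Rightarrow> bool" where
  "iso_closed C Obs M \<longleftrightarrow> (\<forall>i. iso_arr C i \<and> src C i \<in> Obs \<longrightarrow> tgt C i \<in> Obs \<and> i \<in> M)"

definition clo_ob :: "('o,'m) mcat \<Rightarrow> 'o set \<Rightarrow> 'm set \<Rightarrow> 'o set" where
  "clo_ob C Ob0s M0 = \<Inter>{Obs. \<exists>M. subcat C Obs M \<and> iso_closed C Obs M \<and> Ob0s \<subseteq> Obs \<and> M0 \<subseteq> M}"

definition clo_ar :: "('o,'m) mcat \<Rightarrow> 'o set \<Rightarrow> 'm set \<Rightarrow> 'm set" where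
  "clo_ar C Ob0s M0 = \<Inter>{M. \<exists>Obs. subcat C Obs M \<and> iso_closed C Obs M \<and> Ob0s \<subseteq> Obs \<and> M0 \<subseteq> M}"

definition idl_ob :: "('o,'m) mcat \<Rightarrow> 'o \<Rightarrow> 'o set" where
  "idl_ob C e = clo_ob C {tno C e X | X. X \<in> Ob C} {tnm C (idm C e) f | f. f \<in> Ar C}"

definition idl_ar :: "('o,'m) mcat \<Rightarrow> 'o \<Rightarrow> 'm set" where
  "idl_ar C e = clo_ar C {tno C e X | X. X \<in> Ob C} {tnm C (idm C e) f | f. f \<in> Ar C}"

definition is_functor :: "('o,'m) mcat \<Rightarrow> 'o set \<Rightarrow> 'm set \<Rightarrow> 'o set \<Rightarrow> 'm set
     \<Rightarrow> ('o \<Rightarrow> 'o) \<Rightarrow> ('m \<Rightarrow> 'm) \<Rightarrow> bool" where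
  "is_functor C Ob1s M1 Ob2s M2 Fo Fm \<longleftrightarrow>
     (\<forall>X\<in>Ob1s. Fo X \<in> Ob2s \<and> Fm (idm C X) = idm C (Fo X))
   \<and> (\<forall>f\<in>M1. Fm f \<in> M2 \<and> src C (Fm f) = Fo (src C f) \<and> tgt C (Fm f) = Fo (tgt C f))
   \<and> (\<forall>f\<in>M1. \<forall>g\<in>M1. src C g = tgt C f \<longrightarrow> Fm (cmp C g f) = cmp C (Fm g) (Fm f))"

definition is_equivalence :: "('o,'m) mcat \<Rightarrow> 'o set \<Rightarrow> 'm set \<Rightarrow> 'o set \<Rightarrow> 'm set
     \<Rightarrow> ('o \<Rightarrow> 'o) \<Rightarrow> ('m \<Rightarrow> 'm) \<Rightarrow> bool" where
  "is_equivalence C Ob1s M1 Ob2s M2 Fo Fm \<longleftrightarrow>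
     is_functor C Ob1s M1 Ob2s M2 Fo Fm
   \<and> (\<forall>f\<in>M1. \<forall>f'\<in>M1. src C f = src C f' \<and> tgt C f = tgt C f' \<and> Fm f = Fm f' \<longrightarrow> f = f')
   \<and> (\<forall>X\<in>Ob1s. \<forall>Y\<in>Ob1s. \<forall>k\<in>M2. src C k = Fo X \<and> tgt C k = Fo Y \<longrightarrow>
         (\<exists>f\<in>M1. src C f = X \<and> tgt C f = Y \<and> Fm f = k))
   \<and> (\<forall>Z\<in>Ob2s. \<exists>X\<in>Ob1s. \<exists>i. hom C i (Fo X) Z \<and> iso_in C M2 i)"

text \<open>Semigroupal structure J on a functor (the associator of C is the identity).\<close>
definition semigroupal :: "('o,'m) mcat \<Rightarrow> 'o set \<Rightarrow> 'm set \<Rightarrow> 'o set \<Rightarrow> 'm set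
     \<Rightarrow> ('o \<Rightarrow> 'o) \<Rightarrow> ('m \<Rightarrow> 'm) \<Rightarrow> ('o \<Rightarrow> 'o \<Rightarrow> 'm) \<Rightarrow> bool" where
  "semigroupal C Ob1s M1 Ob2s M2 Fo Fm J \<longleftrightarrow>
     (\<forall>X\<in>Ob1s. \<forall>Y\<in>Ob1s. hom C (J X Y) (tno C (Fo X) (Fo Y)) (Fo (tno C X Y)) \<and> iso_in C M2 (J X Y))
   \<and> (\<forall>f\<in>M1. \<forall>g\<in>M1. cmp C (J (tgt C f) (tgt C g)) (tnm C (Fm f) (Fm g))
                      = cmp C (Fm (tnm C f g)) (J (src C f) (src C g)))
   \<and> (\<forall>X\<in>Ob1s. \<forall>Y\<in>Ob1s. \<forall>Z\<in>Ob1s.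
        cmp C (J (tno C X Y) Z) (tnm C (J X Y) (idm C (Fo Z)))
      = cmp C (J X (tno C Y Z)) (tnm C (idm C (Fo X)) (J Y Z)))"

text \<open>Monoidal structure on a tensor-closed subcategory (Obs, M) with unit U and unit
  constraints l, r (associativity constraints are identities, as C is strict).\<close>
definition monoidal_sub :: "('o,'m) mcat \<Rightarrow> 'o set \<Rightarrow> 'm set \<Rightarrow> 'o
     \<Rightarrow> ('o \<Rightarrow> 'm) \<Rightarrow> ('o \<Rightarrow> 'm) \<Rightarrow> bool" where
  "monoidal_sub C Obs M U l r \<longleftrightarrow>
     U \<in> Obs
   \<and> (\<forall>X\<in>Obs. hom C (l X) (tno C U X) X \<and> iso_in C M (l X))
   \<and> (\<forall>X\<in>Obs. hom C (r X) (tno C X U) X \<and> iso_in C M (r X))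
   \<and> (\<forall>f\<in>M. cmp C (l (tgt C f)) (tnm C (idm C U) f) = cmp C f (l (src C f)))
   \<and> (\<forall>f\<in>M. cmp C (r (tgt C f)) (tnm C f (idm C U)) = cmp C f (r (src C f)))
   \<and> (\<forall>X\<in>Obs. \<forall>Y\<in>Obs. tnm C (r X) (idm C Y) = tnm C (idm C X) (l Y))"

definition monoidal_equivalence :: "('o,'m) mcat \<Rightarrow> 'o set \<Rightarrow> 'm set \<Rightarrow> 'o \<Rightarrow> 'o set \<Rightarrow> 'm set \<Rightarrow> 'o
     \<Rightarrow> ('o \<Rightarrow> 'o) \<Rightarrow> ('m \<Rightarrow> 'm) \<Rightarrow> ('o \<Rightarrow> 'o \<Rightarrow> 'm) \<Rightarrow> 'm \<Rightarrow> bool" where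
  "monoidal_equivalence C Ob1s M1 U1 Ob2s M2 U2 Fo Fm J \<phi> \<longleftrightarrow>
     is_equivalence C Ob1s M1 Ob2s M2 Fo Fm
   \<and> semigroupal C Ob1s M1 Ob2s M2 Fo Fm J
   \<and> hom C \<phi> U2 (Fo U1) \<and> iso_in C M2 \<phi>
   \<and> (\<exists>l1 r1 l2 r2. monoidal_sub C Ob1s M1 U1 l1 r1 \<and> monoidal_sub C Ob2s M2 U2 l2 r2
       \<and> (\<forall>X\<in>Ob1s. l2 (Fo X) = cmp C (Fm (l1 X)) (cmp C (J U1 X) (tnm C \<phi> (idm C (Fo X)))))
       \<and> (\<forall>X\<in>Ob1s. r2 (Fo X) = cmp C (Fm (r1 X)) (cmp C (J X U1) (tnm C (idm C (Fo X)) \<phi>))))"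

text \<open>The group G is a type of class group_add (written additively: g + h is gh,
  - g is the inverse, 0 is the neutral element e).
  Data: one g = \<one>_g with \<Phi> g, \<sigma> g; T g = (To g, Tm g); J g; \<phi> g; u; \<gamma> g h.\<close>

definition partial_action ::
  "('o,'m) mcat \<Rightarrow> ('g::group_add \<Rightarrow> 'o) \<Rightarrow> ('g \<Rightarrow> 'm) \<Rightarrow> ('g \<Rightarrow> 'o \<Rightarrow> 'm)
   \<Rightarrow> ('g \<Rightarrow> 'o \<Rightarrow> 'o) \<Rightarrow> ('g \<Rightarrow> 'm \<Rightarrow> 'm) \<Rightarrow> ('g \<Rightarrow> 'o \<Rightarrow> 'o \<Rightarrow> 'm) \<Rightarrow> ('g \<Rightarrow> 'm)
   \<Rightarrow> ('o \<Rightarrow> 'm) \<Rightarrow> ('g \<Rightarrow> 'g \<Rightarrow> 'o \<Rightarrow> 'm) \<Rightarrow> bool" where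
  "partial_action C one \<Phi> \<sigma> To Tm J \<phi> u \<gamma> \<longleftrightarrow>
     (\<forall>g. central_idempotent C (one g) (\<Phi> g) (\<sigma> g))
   \<and> one 0 = unt C
   \<comment> \<open>T_g : C_{g^-1} \<rightarrow> C_g monoidal equivalence\<close>
   \<and> (\<forall>g. monoidal_equivalence C (idl_ob C (one (- g))) (idl_ar C (one (- g))) (one (- g))
                                  (idl_ob C (one g)) (idl_ar C (one g)) (one g)
                                  (To g) (Tm g) (J g) (\<phi> g))
   \<comment> \<open>restriction C_{g^-1} \<inter> C_h \<rightarrow> C_g \<inter> C_{gh} is a semigroupal equivalence\<close>
   \<and> (\<forall>g h. is_equivalence C
               (idl_ob C (one (- g)) \<inter> idl_ob C (one h)) (idl_ar C (one (- g)) \<inter> idl_ar C (one h))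
               (idl_ob C (one g) \<inter> idl_ob C (one (g + h))) (idl_ar C (one g) \<inter> idl_ar C (one (g + h)))
               (To g) (Tm g)
          \<and> semigroupal C
               (idl_ob C (one (- g)) \<inter> idl_ob C (one h)) (idl_ar C (one (- g)) \<inter> idl_ar C (one h))
               (idl_ob C (one g) \<inter> idl_ob C (one (g + h))) (idl_ar C (one g) \<inter> idl_ar C (one (g + h)))
               (To g) (Tm g) (J g))
   \<comment> \<open>u : Id \<Rightarrow> T_e natural isomorphism of semigroupal functors\<close>
   \<and> (\<forall>X\<in>Ob C. hom C (u X) X (To 0 X) \<and> iso_arr C (u X))
   \<and> (\<forall>f\<in>Ar C. cmp C (u (tgt C f)) f = cmp C (Tm 0 f) (u (src C f)))
   \<and> (\<forall>X\<in>Ob C. \<forall>Y\<in>Ob C. cmp C (J 0 X Y) (tnm C (u X) (u Y)) = u (tno C X Y))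
   \<comment> \<open>\<gamma>_{g,h} : T_g T_h \<Rightarrow> T_{gh} on C_{h^-1} \<inter> C_{h^-1 g^-1}, valued in C_g \<inter> C_{gh}\<close>
   \<and> (\<forall>g h. \<forall>X\<in>idl_ob C (one (- h)) \<inter> idl_ob C (one (- h + - g)).
          hom C (\<gamma> g h X) (To g (To h X)) (To (g + h) X)
        \<and> iso_in C (idl_ar C (one g) \<inter> idl_ar C (one (g + h))) (\<gamma> g h X))
   \<and> (\<forall>g h. \<forall>f\<in>idl_ar C (one (- h)) \<inter> idl_ar C (one (- h + - g)).
          cmp C (\<gamma> g h (tgt C f)) (Tm g (Tm h f)) = cmp C (Tm (g + h) f) (\<gamma> g h (src C f)))
   \<and> (\<forall>g h. \<forall>X\<in>idl_ob C (one (- h)) \<inter> idl_ob C (one (- h + - g)).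
        \<forall>Y\<in>idl_ob C (one (- h)) \<inter> idl_ob C (one (- h + - g)).
          cmp C (J (g + h) X Y) (tnm C (\<gamma> g h X) (\<gamma> g h Y))
        = cmp C (\<gamma> g h (tno C X Y)) (cmp C (Tm g (J h X Y)) (J g (To h X) (To h Y))))
   \<comment> \<open>cocycle condition\<close>
   \<and> (\<forall>g h k. \<forall>X\<in>idl_ob C (one (- k)) \<inter> idl_ob C (one (- k + - h)) \<inter> idl_ob C (one (- k + - h + - g)).
          cmp C (\<gamma> (g + h) k X) (\<gamma> g h (To k X)) = cmp C (\<gamma> g (h + k) X) (Tm g (\<gamma> h k X)))
   \<comment> \<open>unit conditions\<close>
   \<and> (\<forall>g. \<forall>X\<in>idl_ob C (one (- g)).
          cmp C (\<gamma> 0 g X) (u (To g X)) = idm C (To g X)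
        \<and> cmp C (u (To g X)) (\<gamma> 0 g X) = idm C (To 0 (To g X))
        \<and> cmp C (\<gamma> g 0 X) (Tm g (u X)) = idm C (To g X)
        \<and> cmp C (Tm g (u X)) (\<gamma> g 0 X) = idm C (To g (To 0 X)))"

end

theory Submission
  imports Defs
begin

text \<open>Put E = 1_{g^-1} \<otimes> 1_h and U = 1_g \<otimes> 1_{gh}. Every object of an ideal
  \<open>\<overline>{e \<otimes> C}\<close> absorbs e up to isomorphism, so E is a unit up to isomorphism of
  C_{g^-1} \<inter> C_h and U one of C_g \<inter> C_{gh}. Since T_g restricts to a semigroupal equivalence
  between these two categories, some X satisfies T_g X \<cong> U, and then
  U \<cong> T_g X \<cong> T_g (E \<otimes> X) \<cong> T_g E \<otimes> T_g X \<cong> T_g E \<otimes> U \<cong> T_g E.\<close>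

definition isomorphic :: "('o,'m) mcat \<Rightarrow> 'o \<Rightarrow> 'o \<Rightarrow> bool" where
  "isomorphic C X Y \<longleftrightarrow> (\<exists>f. hom C f X Y \<and> iso_arr C f)"

lemma iso_in_imp_isomorphic:
  "hom C f X Y \<Longrightarrow> iso_in C M f \<Longrightarrow> M \<subseteq> Ar C \<Longrightarrow> isomorphic C X Y"
  unfolding isomorphic_def iso_arr_def iso_in_def by blast

lemma isomorphic_iff_inverse_pair:
  "isomorphic C X Y \<longleftrightarrow>
     (\<exists>f g. hom C f X Y \<and> hom C g Y X \<and> cmp C g f = idm C X \<and> cmp C f g = idm C Y)"
  unfolding isomorphic_def iso_arr_def iso_in_def hom_def by auto

lemma isomorphic_sym: "isomorphic C X Y \<Longrightarrow> isomorphic C Y X"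
  unfolding isomorphic_iff_inverse_pair by blast

lemma functor_preserves_iso_in:
  assumes F: "is_functor C Ob1 M1 Ob2 M2 Fo Fm"
    and k: "iso_in C M1 k" "src C k \<in> Ob1" "tgt C k \<in> Ob1"
  shows "iso_in C M2 (Fm k)"
proof -
  have F_idm: "\<And>X. X \<in> Ob1 \<Longrightarrow> Fm (idm C X) = idm C (Fo X)"
    and F_arr: "\<And>f. f \<in> M1 \<Longrightarrow> Fm f \<in> M2 \<and> src C (Fm f) = Fo (src C f) \<and> tgt C (Fm f) = Fo (tgt C f)"
    and F_cmp: "\<And>f g. f \<in> M1 \<Longrightarrow> g \<in> M1 \<Longrightarrow> src C g = tgt C f \<Longrightarrow> Fm (cmp C g f) = cmp C (Fm g) (Fm f)"
    using F unfolding is_functor_def by blast+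
  obtain k' where "k \<in> M1" and k': "k' \<in> M1" "src C k' = tgt C k" "tgt C k' = src C k"
    "cmp C k' k = idm C (src C k)" "cmp C k k' = idm C (tgt C k)"
    using k(1) unfolding iso_in_def by blast
  show ?thesis
    unfolding iso_in_def
  proof (intro conjI bexI[of _ "Fm k'"])
    show "Fm k \<in> M2" "Fm k' \<in> M2"
      using F_arr \<open>k \<in> M1\<close> k'(1) by blast+
    show "src C (Fm k') = tgt C (Fm k)" "tgt C (Fm k') = src C (Fm k)"
      using F_arr \<open>k \<in> M1\<close> k'(1-3) by simp_all
    show "cmp C (Fm k') (Fm k) = idm C (src C (Fm k))"
      using F_cmp[OF \<open>k \<in> M1\<close> k'(1,2)] k'(4) F_idm[OF k(2)] F_arr \<open>k \<in> M1\<close> by simp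
    show "cmp C (Fm k) (Fm k') = idm C (tgt C (Fm k))"
      using F_cmp[OF k'(1) \<open>k \<in> M1\<close>] k' F_idm[OF k(3)] F_arr \<open>k \<in> M1\<close> by simp
  qed
qed

locale strict_monoidal =
  fixes C :: "('o,'m) mcat"
  assumes strict_monoidal: "strict_monoidal_cat C"
begin

lemma arr_src_tgt_ob: "f \<in> Ar C \<Longrightarrow> src C f \<in> Ob C \<and> tgt C f \<in> Ob C"
  using strict_monoidal unfolding strict_monoidal_cat_def by meson

lemma idm_hom: "X \<in> Ob C \<Longrightarrow> hom C (idm C X) X X"
  using strict_monoidal unfolding strict_monoidal_cat_def by meson

lemma cmp_hom: "hom C f X Y \<Longrightarrow> hom C g Y Z \<Longrightarrow> hom C (cmp C g f) X Z"
  using strict_monoidal unfolding strict_monoidal_cat_def hom_def by meson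

lemma cmp_idm_right: "hom C f X Y \<Longrightarrow> cmp C f (idm C X) = f"
  using strict_monoidal unfolding strict_monoidal_cat_def hom_def by meson

lemma cmp_assoc:
  "hom C f X Y \<Longrightarrow> hom C g Y Z \<Longrightarrow> hom C h Z W \<Longrightarrow> cmp C h (cmp C g f) = cmp C (cmp C h g) f"
  using strict_monoidal unfolding strict_monoidal_cat_def hom_def by meson

lemma tno_ob: "X \<in> Ob C \<Longrightarrow> Y \<in> Ob C \<Longrightarrow> tno C X Y \<in> Ob C"
  using strict_monoidal unfolding strict_monoidal_cat_def by meson

lemma tno_assoc:
  "X \<in> Ob C \<Longrightarrow> Y \<in> Ob C \<Longrightarrow> Z \<in> Ob C \<Longrightarrow> tno C (tno C X Y) Z = tno C X (tno C Y Z)"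
  using strict_monoidal unfolding strict_monoidal_cat_def by meson

lemma tnm_hom: "hom C f X Y \<Longrightarrow> hom C g X' Y' \<Longrightarrow> hom C (tnm C f g) (tno C X X') (tno C Y Y')"
  using strict_monoidal unfolding strict_monoidal_cat_def hom_def by meson

lemma tnm_idm: "X \<in> Ob C \<Longrightarrow> Y \<in> Ob C \<Longrightarrow> tnm C (idm C X) (idm C Y) = idm C (tno C X Y)"
  using strict_monoidal unfolding strict_monoidal_cat_def by meson

lemma interchange:
  "hom C f X Y \<Longrightarrow> hom C f' Y Z \<Longrightarrow> hom C g X' Y' \<Longrightarrow> hom C g' Y' Z' \<Longrightarrow>
   tnm C (cmp C f' f) (cmp C g' g) = cmp C (tnm C f' g') (tnm C f g)"
  using strict_monoidal unfolding strict_monoidal_cat_def hom_def by meson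

lemma hom_ob: "hom C f X Y \<Longrightarrow> X \<in> Ob C \<and> Y \<in> Ob C"
  using arr_src_tgt_ob unfolding hom_def by blast

lemma isomorphic_ob: "isomorphic C X Y \<Longrightarrow> X \<in> Ob C \<and> Y \<in> Ob C"
  using hom_ob unfolding isomorphic_def by blast

lemma whisker_hom:
  "e \<in> Ob C \<Longrightarrow> f \<in> Ar C \<Longrightarrow> hom C (tnm C (idm C e) f) (tno C e (src C f)) (tno C e (tgt C f))"
  using tnm_hom[OF idm_hom, of e f "src C f" "tgt C f"] by (simp add: hom_def)

lemma isomorphic_refl: "X \<in> Ob C \<Longrightarrow> isomorphic C X X"
  unfolding isomorphic_iff_inverse_pair using idm_hom cmp_idm_right by blast

lemma isomorphic_trans [trans]: "isomorphic C X Y \<Longrightarrow> isomorphic C Y Z \<Longrightarrow> isomorphic C X Z"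
proof -
  assume "isomorphic C X Y" "isomorphic C Y Z"
  then obtain f f' g g' where f: "hom C f X Y" "hom C f' Y X" "cmp C f' f = idm C X" "cmp C f f' = idm C Y"
    and g: "hom C g Y Z" "hom C g' Z Y" "cmp C g' g = idm C Y" "cmp C g g' = idm C Z"
    unfolding isomorphic_iff_inverse_pair by blast
  have "cmp C (cmp C f' g') (cmp C g f) = cmp C (cmp C (cmp C f' g') g) f"
    using cmp_assoc[OF f(1) g(1) cmp_hom[OF g(2) f(2)]] .
  also have "cmp C (cmp C f' g') g = cmp C f' (cmp C g' g)"
    using cmp_assoc[OF g(1,2) f(2)] by simp
  also have "\<dots> = f'" using g(3) cmp_idm_right[OF f(2)] by simp
  finally have left: "cmp C (cmp C f' g') (cmp C g f) = idm C X" using f(3) by simp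
  have "cmp C (cmp C g f) (cmp C f' g') = cmp C (cmp C (cmp C g f) f') g'"
    using cmp_assoc[OF g(2) f(2) cmp_hom[OF f(1) g(1)]] .
  also have "cmp C (cmp C g f) f' = cmp C g (cmp C f f')"
    using cmp_assoc[OF f(2,1) g(1)] by simp
  also have "\<dots> = g" using f(4) cmp_idm_right[OF g(1)] by simp
  finally have right: "cmp C (cmp C g f) (cmp C f' g') = idm C Z" using g(4) by simp
  show "isomorphic C X Z"
    unfolding isomorphic_iff_inverse_pair
    using cmp_hom[OF f(1) g(1)] cmp_hom[OF g(2) f(2)] left right by blast
qed

lemma isomorphic_tensor:
  assumes "isomorphic C X X'" "isomorphic C Y Y'"
  shows "isomorphic C (tno C X Y) (tno C X' Y')"
proof -
  obtain f f' g g' where f: "hom C f X X'" "hom C f' X' X" "cmp C f' f = idm C X" "cmp C f f' = idm C X'"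
    and g: "hom C g Y Y'" "hom C g' Y' Y" "cmp C g' g = idm C Y" "cmp C g g' = idm C Y'"
    using assms unfolding isomorphic_iff_inverse_pair by blast
  have "cmp C (tnm C f' g') (tnm C f g) = idm C (tno C X Y)"
    using interchange[OF f(1,2) g(1,2)] f(3) g(3) tnm_idm hom_ob[OF f(1)] hom_ob[OF g(1)] by simp
  moreover have "cmp C (tnm C f g) (tnm C f' g') = idm C (tno C X' Y')"
    using interchange[OF f(2,1) g(2,1)] f(4) g(4) tnm_idm hom_ob[OF f(1)] hom_ob[OF g(1)] by simp
  ultimately show ?thesis
    unfolding isomorphic_iff_inverse_pair using tnm_hom[OF f(1) g(1)] tnm_hom[OF f(2) g(2)] by blast
qed

end

lemma clo_minimal:
  assumes "subcat C Obs M" "iso_closed C Obs M" "O0 \<subseteq> Obs" "M0 \<subseteq> M"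
  shows "clo_ob C O0 M0 \<subseteq> Obs" "clo_ar C O0 M0 \<subseteq> M"
  unfolding clo_ob_def clo_ar_def using assms by blast+

lemma clo_ob_iso_closed:
  assumes "X \<in> clo_ob C O0 M0" "iso_arr C i" "src C i = X"
  shows "tgt C i \<in> clo_ob C O0 M0" "i \<in> clo_ar C O0 M0"
  using assms unfolding clo_ob_def clo_ar_def iso_closed_def by blast+

context strict_monoidal
begin

lemma subcat_full: "subcat C (Ob C) (Ar C)"
  unfolding subcat_def
proof (intro conjI ballI impI subset_refl)
  show "src C f \<in> Ob C" "tgt C f \<in> Ob C" if "f \<in> Ar C" for f
    using arr_src_tgt_ob that by blast+
  show "idm C X \<in> Ar C" if "X \<in> Ob C" for X
    using idm_hom that unfolding hom_def by blast
  show "cmp C g f \<in> Ar C" if "f \<in> Ar C" "g \<in> Ar C" "src C g = tgt C f" for f g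
    using cmp_hom[of f "src C f" "tgt C f" g "tgt C g"] that unfolding hom_def by blast
qed

lemma iso_closed_full: "iso_closed C (Ob C) (Ar C)"
  unfolding iso_closed_def iso_arr_def iso_in_def using arr_src_tgt_ob by blast

lemma clo_subset:
  assumes "O0 \<subseteq> Ob C" "M0 \<subseteq> Ar C"
  shows "clo_ob C O0 M0 \<subseteq> Ob C" "clo_ar C O0 M0 \<subseteq> Ar C"
  using clo_minimal[OF subcat_full iso_closed_full assms] by blast+

lemma clo_ob_induct:
  assumes X: "X \<in> clo_ob C O0 M0"
    and P: "P \<subseteq> Ob C" "O0 \<subseteq> P"
    and M0: "\<And>f. f \<in> M0 \<Longrightarrow> f \<in> Ar C \<and> src C f \<in> P \<and> tgt C f \<in> P"
    and iso: "\<And>Y Z. Y \<in> P \<Longrightarrow> isomorphic C Y Z \<Longrightarrow> Z \<in> P"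
  shows "X \<in> P"
proof -
  define M where "M = {f \<in> Ar C. src C f \<in> P \<and> tgt C f \<in> P}"
  have "subcat C P M"
    unfolding subcat_def
  proof (intro conjI ballI impI)
    show "idm C X \<in> M" if "X \<in> P" for X
      using idm_hom[of X] that P(1) unfolding M_def hom_def by auto
    show "cmp C g f \<in> M" if "f \<in> M" "g \<in> M" "src C g = tgt C f" for f g
      using cmp_hom[of f "src C f" "tgt C f" g "tgt C g"] that unfolding M_def hom_def by auto
  qed (use P(1) in \<open>auto simp: M_def\<close>)
  moreover have "iso_closed C P M"
    unfolding iso_closed_def
  proof (intro allI impI)
    fix i assume i: "iso_arr C i \<and> src C i \<in> P"
    then have "i \<in> Ar C" unfolding iso_arr_def iso_in_def by blast
    moreover have "tgt C i \<in> P"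
      using iso[of "src C i" "tgt C i"] i \<open>i \<in> Ar C\<close> unfolding isomorphic_def hom_def by blast
    ultimately show "tgt C i \<in> P \<and> i \<in> M" using i unfolding M_def by blast
  qed
  moreover have "M0 \<subseteq> M" using M0 unfolding M_def by blast
  ultimately show ?thesis using clo_minimal(1) X P(2) by blast
qed

lemma idl_subset:
  assumes "e \<in> Ob C" shows "idl_ob C e \<subseteq> Ob C" "idl_ar C e \<subseteq> Ar C"
proof -
  have gen_ob: "{tno C e X | X. X \<in> Ob C} \<subseteq> Ob C" using tno_ob assms by blast
  have gen_ar: "{tnm C (idm C e) f | f. f \<in> Ar C} \<subseteq> Ar C"
  proof clarify
    fix f assume "f \<in> Ar C"
    from whisker_hom[OF assms this] show "tnm C (idm C e) f \<in> Ar C" by (simp add: hom_def)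
  qed
  show "idl_ob C e \<subseteq> Ob C" "idl_ar C e \<subseteq> Ar C"
    unfolding idl_ob_def idl_ar_def using clo_subset[OF gen_ob gen_ar] by simp_all
qed

lemma idl_ob_induct:
  assumes "X \<in> idl_ob C e" "e \<in> Ob C" "P \<subseteq> Ob C"
    and gen: "\<And>Y. Y \<in> Ob C \<Longrightarrow> tno C e Y \<in> P"
    and iso: "\<And>Y Z. Y \<in> P \<Longrightarrow> isomorphic C Y Z \<Longrightarrow> Z \<in> P"
  shows "X \<in> P"
  using assms(1) unfolding idl_ob_def
proof (rule clo_ob_induct)
  show "m \<in> Ar C \<and> src C m \<in> P \<and> tgt C m \<in> P"
    if "m \<in> {tnm C (idm C e) f | f. f \<in> Ar C}" for m
    using that whisker_hom[OF \<open>e \<in> Ob C\<close>] arr_src_tgt_ob gen unfolding hom_def by auto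
qed (use assms(3) gen iso in blast)+

end

lemma tno_mem_idl_ob: "X \<in> Ob C \<Longrightarrow> tno C e X \<in> idl_ob C e"
  unfolding idl_ob_def clo_ob_def by auto

lemma idl_ob_isomorphic_closed:
  assumes "X \<in> idl_ob C e" "isomorphic C X Y" shows "Y \<in> idl_ob C e"
proof -
  obtain f where f: "src C f = X" "tgt C f = Y" "iso_arr C f"
    using assms(2) unfolding isomorphic_def hom_def by blast
  show ?thesis
    using clo_ob_iso_closed(1)[OF assms(1)[unfolded idl_ob_def] f(3,1)] f(2)
    unfolding idl_ob_def by simp
qed

lemma iso_in_idl_Int:
  assumes k: "iso_arr C k" and X: "src C k \<in> idl_ob C e \<inter> idl_ob C e'"
  shows "iso_in C (idl_ar C e \<inter> idl_ar C e') k" "tgt C k \<in> idl_ob C e \<inter> idl_ob C e'"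
proof -
  obtain k' where k': "k' \<in> Ar C" "src C k' = tgt C k" "tgt C k' = src C k"
    "cmp C k' k = idm C (src C k)" "cmp C k k' = idm C (tgt C k)"
    using k unfolding iso_arr_def iso_in_def by blast
  have "iso_arr C k'"
    using k k' unfolding iso_arr_def iso_in_def by auto
  show Y: "tgt C k \<in> idl_ob C e \<inter> idl_ob C e'"
    using clo_ob_iso_closed(1)[OF _ k] X unfolding idl_ob_def by blast
  have "k \<in> idl_ar C e \<inter> idl_ar C e'"
    using clo_ob_iso_closed(2)[OF _ k] X unfolding idl_ob_def idl_ar_def by blast
  moreover have "k' \<in> idl_ar C e \<inter> idl_ar C e'"
    using clo_ob_iso_closed(2)[OF _ \<open>iso_arr C k'\<close> k'(2)] Y unfolding idl_ob_def idl_ar_def by blast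
  ultimately show "iso_in C (idl_ar C e \<inter> idl_ar C e') k"
    unfolding iso_in_def using k' by blast
qed

definition central_idempotent_up_to_iso :: "('o,'m) mcat \<Rightarrow> 'o \<Rightarrow> bool" where
  "central_idempotent_up_to_iso C e \<longleftrightarrow>
     e \<in> Ob C \<and> isomorphic C (tno C e e) e \<and> (\<forall>X\<in>Ob C. isomorphic C (tno C e X) (tno C X e))"

lemma central_idempotent_imp_up_to_iso:
  assumes "central_idempotent C e \<Phi> \<sigma>" shows "central_idempotent_up_to_iso C e"
proof -
  have "e \<in> Ob C" "hom C \<Phi> (tno C e e) e" "iso_arr C \<Phi>"
    "\<forall>X\<in>Ob C. hom C (\<sigma> X) (tno C e X) (tno C X e) \<and> iso_arr C (\<sigma> X)"
    using assms unfolding central_idempotent_def by blast+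
  then show ?thesis unfolding central_idempotent_up_to_iso_def isomorphic_def by blast
qed

context strict_monoidal
begin

lemma tno_mem_idl_ob_right:
  assumes e: "central_idempotent_up_to_iso C e" and X: "X \<in> Ob C"
  shows "tno C X e \<in> idl_ob C e"
proof -
  have "isomorphic C (tno C e X) (tno C X e)"
    using e X unfolding central_idempotent_up_to_iso_def by blast
  then show ?thesis by (rule idl_ob_isomorphic_closed[OF tno_mem_idl_ob[OF X]])
qed

lemma idl_ob_absorbs_left:
  assumes e: "central_idempotent_up_to_iso C e" and X: "X \<in> idl_ob C e"
  shows "isomorphic C (tno C e X) X"
proof -
  have e_ob: "e \<in> Ob C" and idem: "isomorphic C (tno C e e) e"
    using e unfolding central_idempotent_up_to_iso_def by blast+
  have "X \<in> {X \<in> Ob C. isomorphic C (tno C e X) X}"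
    using X e_ob
  proof (rule idl_ob_induct)
    show "tno C e Y \<in> {X \<in> Ob C. isomorphic C (tno C e X) X}" if "Y \<in> Ob C" for Y
      using isomorphic_tensor[OF idem isomorphic_refl[OF that]] tno_assoc[OF e_ob e_ob that]
        tno_ob[OF e_ob that] by simp
    show "Z \<in> {X \<in> Ob C. isomorphic C (tno C e X) X}"
      if Y: "Y \<in> {X \<in> Ob C. isomorphic C (tno C e X) X}" and YZ: "isomorphic C Y Z" for Y Z
    proof -
      have "isomorphic C (tno C e Z) (tno C e Y)"
        using isomorphic_tensor[OF isomorphic_refl[OF e_ob] isomorphic_sym[OF YZ]] .
      also have "isomorphic C (tno C e Y) Y" using Y by blast
      also have "isomorphic C Y Z" by (rule YZ)
      finally show ?thesis using isomorphic_ob[OF YZ] by blast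
    qed
  qed blast
  then show ?thesis by blast
qed

lemma idl_ob_absorbs_right:
  assumes e: "central_idempotent_up_to_iso C e" and X: "X \<in> idl_ob C e"
  shows "isomorphic C (tno C X e) X"
proof -
  have "e \<in> Ob C" using e unfolding central_idempotent_up_to_iso_def by blast
  then have "X \<in> Ob C" using X idl_subset(1) by blast
  then have "isomorphic C (tno C e X) (tno C X e)"
    using e unfolding central_idempotent_up_to_iso_def by blast
  then have "isomorphic C (tno C X e) (tno C e X)" by (rule isomorphic_sym)
  also have "isomorphic C (tno C e X) X" using idl_ob_absorbs_left[OF e X] .
  finally show ?thesis .
qed

lemma tno_mem_idl_ob_Int:
  assumes "central_idempotent_up_to_iso C e" "central_idempotent_up_to_iso C e'"
  shows "tno C e e' \<in> idl_ob C e \<inter> idl_ob C e'"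
proof -
  have "e \<in> Ob C" "e' \<in> Ob C" using assms unfolding central_idempotent_up_to_iso_def by blast+
  with tno_mem_idl_ob[of e' C e] tno_mem_idl_ob_right[OF assms(2)] show ?thesis by blast
qed

lemma idl_ob_Int_absorbs:
  assumes e: "central_idempotent_up_to_iso C e" and e': "central_idempotent_up_to_iso C e'"
    and X: "X \<in> idl_ob C e \<inter> idl_ob C e'"
  shows "isomorphic C (tno C (tno C e e') X) X" "isomorphic C (tno C X (tno C e e')) X"
proof -
  have "e \<in> Ob C" "e' \<in> Ob C" using e e' unfolding central_idempotent_up_to_iso_def by blast+
  then have ob: "e \<in> Ob C" "e' \<in> Ob C" "X \<in> Ob C" using idl_subset(1)[of e] X by blast+
  have "tno C (tno C e e') X = tno C e (tno C e' X)" using tno_assoc[OF ob] .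
  also have "isomorphic C \<dots> (tno C e X)"
    using isomorphic_tensor[OF isomorphic_refl[OF ob(1)] idl_ob_absorbs_left[OF e']] X by blast
  also have "isomorphic C \<dots> X" using idl_ob_absorbs_left[OF e] X by blast
  finally show "isomorphic C (tno C (tno C e e') X) X" .
  have "tno C X (tno C e e') = tno C (tno C X e) e'" using tno_assoc[OF ob(3,1,2)] by simp
  also have "isomorphic C \<dots> (tno C X e')"
    using isomorphic_tensor[OF idl_ob_absorbs_right[OF e] isomorphic_refl[OF ob(2)]] X by blast
  also have "isomorphic C \<dots> X" using idl_ob_absorbs_right[OF e'] X by blast
  finally show "isomorphic C (tno C X (tno C e e')) X" .
qed

lemma semigroupal_equivalence_unit_isomorphic:
  assumes eq: "is_equivalence C Ob1 M1 Ob2 M2 F Fm"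
    and J: "semigroupal C Ob1 M1 Ob2 M2 F Fm J"
    and sub: "Ob2 \<subseteq> Ob C" "M2 \<subseteq> Ar C"
    and E: "E \<in> Ob1" and U: "U \<in> Ob2"
    and E_unit: "\<And>X. X \<in> Ob1 \<Longrightarrow> \<exists>k. hom C k X (tno C E X) \<and> iso_in C M1 k \<and> tno C E X \<in> Ob1"
    and U_unit: "\<And>Y. Y \<in> Ob2 \<Longrightarrow> isomorphic C (tno C Y U) Y"
  shows "isomorphic C U (F E)"
proof -
  have F: "is_functor C Ob1 M1 Ob2 M2 F Fm"
    and ess_surj: "\<forall>Z\<in>Ob2. \<exists>X\<in>Ob1. \<exists>i. hom C i (F X) Z \<and> iso_in C M2 i"
    using eq unfolding is_equivalence_def by blast+
  have F_ob: "\<forall>X\<in>Ob1. F X \<in> Ob2"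
    and F_arr: "\<forall>f\<in>M1. Fm f \<in> M2 \<and> src C (Fm f) = F (src C f) \<and> tgt C (Fm f) = F (tgt C f)"
    using F unfolding is_functor_def by blast+
  have J_iso: "\<forall>X\<in>Ob1. \<forall>Y\<in>Ob1. hom C (J X Y) (tno C (F X) (F Y)) (F (tno C X Y)) \<and> iso_in C M2 (J X Y)"
    using J unfolding semigroupal_def by blast
  obtain X i where X: "X \<in> Ob1" "hom C i (F X) U" "iso_in C M2 i"
    using ess_surj U by blast
  obtain k where k: "hom C k X (tno C E X)" "iso_in C M1 k" "tno C E X \<in> Ob1"
    using E_unit[OF X(1)] by blast
  have FE: "F E \<in> Ob2" using F_ob E by blast
  have FX_U: "isomorphic C (F X) U" using iso_in_imp_isomorphic[OF X(2,3) sub(2)] .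
  have "isomorphic C U (F X)" using isomorphic_sym[OF FX_U] .
  also have "isomorphic C (F X) (F (tno C E X))"
  proof (rule iso_in_imp_isomorphic[OF _ _ sub(2)])
    have "k \<in> M1" using k(2) unfolding iso_in_def by blast
    then have "Fm k \<in> M2" "src C (Fm k) = F X" "tgt C (Fm k) = F (tno C E X)"
      using F_arr k(1) unfolding hom_def by auto
    then show "hom C (Fm k) (F X) (F (tno C E X))"
      using sub(2) unfolding hom_def by blast
    show "iso_in C M2 (Fm k)"
      using functor_preserves_iso_in[OF F k(2)] k(1,3) X(1) unfolding hom_def by simp
  qed
  also have "isomorphic C (F (tno C E X)) (tno C (F E) (F X))"
  proof -
    have "hom C (J E X) (tno C (F E) (F X)) (F (tno C E X))" "iso_in C M2 (J E X)"
      using J_iso E X(1) by blast+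
    from isomorphic_sym[OF iso_in_imp_isomorphic[OF this sub(2)]] show ?thesis .
  qed
  also have "isomorphic C (tno C (F E) (F X)) (tno C (F E) U)"
    using isomorphic_tensor[OF isomorphic_refl FX_U] FE sub(1) by blast
  also have "isomorphic C (tno C (F E) U) (F E)" using U_unit[OF FE] .
  finally show ?thesis .
qed

lemma semigroupal_equivalence_idl_Int_unit_isomorphic:
  assumes idem: "central_idempotent_up_to_iso C a" "central_idempotent_up_to_iso C b"
      "central_idempotent_up_to_iso C c" "central_idempotent_up_to_iso C d"
    and eq: "is_equivalence C (idl_ob C a \<inter> idl_ob C b) (idl_ar C a \<inter> idl_ar C b)
               (idl_ob C c \<inter> idl_ob C d) (idl_ar C c \<inter> idl_ar C d) F Fm"
    and J: "semigroupal C (idl_ob C a \<inter> idl_ob C b) (idl_ar C a \<inter> idl_ar C b)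
               (idl_ob C c \<inter> idl_ob C d) (idl_ar C c \<inter> idl_ar C d) F Fm J"
  shows "isomorphic C (tno C c d) (F (tno C a b))"
proof (rule semigroupal_equivalence_unit_isomorphic[OF eq J])
  have "c \<in> Ob C" using idem(3) unfolding central_idempotent_up_to_iso_def by blast
  then show "idl_ob C c \<inter> idl_ob C d \<subseteq> Ob C" "idl_ar C c \<inter> idl_ar C d \<subseteq> Ar C"
    using idl_subset by blast+
  show "tno C a b \<in> idl_ob C a \<inter> idl_ob C b" "tno C c d \<in> idl_ob C c \<inter> idl_ob C d"
    using tno_mem_idl_ob_Int idem by blast+
  show "\<exists>k. hom C k X (tno C (tno C a b) X) \<and> iso_in C (idl_ar C a \<inter> idl_ar C b) k
            \<and> tno C (tno C a b) X \<in> idl_ob C a \<inter> idl_ob C b"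
    if X: "X \<in> idl_ob C a \<inter> idl_ob C b" for X
  proof -
    obtain k where k: "hom C k X (tno C (tno C a b) X)" "iso_arr C k"
      using isomorphic_sym[OF idl_ob_Int_absorbs(1)[OF idem(1,2) X]] unfolding isomorphic_def by blast
    then show ?thesis using iso_in_idl_Int[OF k(2)] X unfolding hom_def by auto
  qed
  show "isomorphic C (tno C Y (tno C c d)) Y" if "Y \<in> idl_ob C c \<inter> idl_ob C d" for Y
    using idl_ob_Int_absorbs(2)[OF idem(3,4) that] .
qed

end

theorem lemma3p6:
  fixes C :: "('o, 'm) mcat"
    and one :: "'g::group_add \<Rightarrow> 'o"
  assumes "strict_monoidal_cat C"
    and "partial_action C one \<Phi> \<sigma> To Tm J \<phi> u \<gamma>"
  shows "\<forall>g h. \<exists>f. hom C f (tno C (one g) (one (g + h))) (To g (tno C (one (- g)) (one h)))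
                   \<and> iso_arr C f"
proof (intro allI)
  fix g h
  interpret strict_monoidal C by (rule strict_monoidal.intro[OF assms(1)])
  have "\<forall>x. central_idempotent C (one x) (\<Phi> x) (\<sigma> x)"
    using assms(2) unfolding partial_action_def by (rule conjunct1)
  then have idem: "\<And>x. central_idempotent_up_to_iso C (one x)"
    using central_idempotent_imp_up_to_iso by meson
  have "is_equivalence C
          (idl_ob C (one (- g)) \<inter> idl_ob C (one h)) (idl_ar C (one (- g)) \<inter> idl_ar C (one h))
          (idl_ob C (one g) \<inter> idl_ob C (one (g + h))) (idl_ar C (one g) \<inter> idl_ar C (one (g + h)))
          (To g) (Tm g)
      \<and> semigroupal C
          (idl_ob C (one (- g)) \<inter> idl_ob C (one h)) (idl_ar C (one (- g)) \<inter> idl_ar C (one h))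
          (idl_ob C (one g) \<inter> idl_ob C (one (g + h))) (idl_ar C (one g) \<inter> idl_ar C (one (g + h)))
          (To g) (Tm g) (J g)"
    using assms(2) unfolding partial_action_def by meson
  then show "\<exists>f. hom C f (tno C (one g) (one (g + h))) (To g (tno C (one (- g)) (one h)))
                 \<and> iso_arr C f"
    using semigroupal_equivalence_idl_Int_unit_isomorphic[OF idem idem idem idem]
    unfolding isomorphic_def by blast
qed

end
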